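(* Consider the nonlinear kinetic equation with longitudinal scattering described in the context, with $d\sigma\ge2$ and $g>0$, and a maximally extended local solution on $[0,z_* )$ satisfying the standing assumptions. Define $$F(z)=V_x(0)+2V_{xp}(0)z+d\sigma(H(0)-\bar H)z^2+\frac{d\sigma R}{3}z^3,\qquad z_0=\frac{\bar H-H(0)+\sqrt{(H(0)-\bar H)^2-2RV_{xp}(0)/(d\sigma)}}{R}.$$ If $F(z_0)\le0$ and either (i) $V_{xp}(0)<0$, or (ii) $V_{xp}(0)>0$ and $H(0)<\bar H-\sqrt{2RV_{xp}(0)/(d\sigma)}$, then the solution develops a singularity at a finite time: $z_*\le z_0$.
   Context: Setting. Let $d\ge1$, $\sigma>0$, $g\in\mathbb R$. Let $\Phi(w,\mathbf p)\ge0$, $(w,\mathbf p)\in\mathbb R\times\mathbb R^d$, be a power spectrum density, rapidly decaying, with $\Phi(w,\mathbf p)=\Phi(-w,\mathbf p)=\Phi(w,-\mathbf p)=\Phi(-w,-\mathbf p)$. The longitudinal scattering operator $\mathcal L$ is either the linear Boltzmann operator $\mathcal L W(\mathbf p)=2\pi\int\Phi(0,\mathbf q-\mathbf p)[W(\mathbf q)-W(\mathbf p)]d\mathbf q$, in which case $R:=2\pi\int\Phi(0,\mathbf q)|\mathbf q|^2d\mathbf q$, or the Fokker–Planck operator $\mathcal LW=\nabla_{\mathbf p}\cdot(\mathbf D\nabla_{\mathbf p}W)$ with $\mathbf D=\pi\int\Phi(0,\mathbf q)\mathbf q\otimes\mathbf q\,d\mathbf q$, in which case $R:=2\,\mathrm{trace}(\mathbf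 D)$. The kinetic equation is $\partial_zW+\mathbf p\cdot\nabla_{\mathbf x}W+\nabla_{\mathbf x}U\cdot\nabla_{\mathbf p}W=\mathcal LW$ for $W(z,\mathbf x,\mathbf p)\ge0$, $\mathbf x,\mathbf p\in\mathbb R^d$, with $\rho(z,\mathbf x)=\int W\,d\mathbf p$ and $U=g\rho^{\sigma}$, understood weakly: $\partial_z\int\Theta W-\int\mathbf p\cdot\nabla_{\mathbf x}\Theta\,W-\int\nabla_{\mathbf x}U\cdot\nabla_{\mathbf p}\Theta\,W-\int(\mathcal L^*\Theta)W=0$ for smooth rapidly decaying $\Theta$. Normalization $\int W\,d\mathbf x\,d\mathbf p=1$. Notation (all integrals over $\mathbb R^{2d}$ against $W(z,\cdot)$): $\bar{\mathbf x}=\int\mathbf xW$, $\bar{\mathbf p}=\int\mathbf pW$, $V_x=\int|\mathbf x-\bar{\mathbf x}|^2W$, $V_p=\int|\mathbf p-\bar{\mathbf p}|^2W$, $V_{xp}=\int(\mathbf x-\bar{\mathbf x})\cdot(\mathbf p-\bar{\mathbf p})W$, Hamiltonian $H=\frac12\int|\mathbf p|^2W-\frac{g}{\sigma+1}\int\rho^{\sigma+1}d\mathbf x$, mean Hamiltonian $\bar H=\frac12|\bar{\mathbf p}|^2$ (constant in $z$ in this setting). Standing assumptions: a local solution exists in the space of nonnegative measures with square-integrable density, finite Dirichlet form $-\int W\mathcal LW$, finite positive variances $V_x,V_p$ and finite Hamiltonian; $[0,z_* )$ is the maximal interval of existence of this solution ($z_*<\infty$ means the solution develops a finite-time singularity);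 on $[0,z_* )$ the weak formulation may be applied with the test functions $x_i,p_i,|\mathbf x|^2,\mathbf x\cdot\mathbf p,|\mathbf p|^2$ (so the energy law and variance identity hold); and $W$ has mixed-state (Wigner measure) structure, so $V_{xp}^2\le V_xV_p$. *)

theory Defs
  imports "HOL-Analysis.Analysis"
begin

definition mom :: "(real \<Rightarrow> (real^'d) \<times> (real^'d) \<Rightarrow> real) \<Rightarrow> real
                   \<Rightarrow> (real^'d \<Rightarrow> real^'d \<Rightarrow> real) \<Rightarrow> real" where
  "mom W z \<Theta> = (\<integral>xp. \<Theta> (fst xp) (snd xp) * W z xp \<partial>lborel)"

definition dens :: "(real \<Rightarrow> (real^'d) \<times> (real^'d) \<Rightarrow> real) \<Rightarrow> real \<Rightarrow> real^'d \<Rightarrow> real" where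
  "dens W z x = (\<integral>p. W z (x, p) \<partial>lborel)"

definition xbar :: "(real \<Rightarrow> (real^'d) \<times> (real^'d) \<Rightarrow> real) \<Rightarrow> real \<Rightarrow> real^'d" where
  "xbar W z = (\<chi> i. mom W z (\<lambda>x p. x $ i))"

definition pbar :: "(real \<Rightarrow> (real^'d) \<times> (real^'d) \<Rightarrow> real) \<Rightarrow> real \<Rightarrow> real^'d" where
  "pbar W z = (\<chi> i. mom W z (\<lambda>x p. p $ i))"

definition Vx :: "(real \<Rightarrow> (real^'d) \<times> (real^'d) \<Rightarrow> real) \<Rightarrow> real \<Rightarrow> real" where
  "Vx W z = mom W z (\<lambda>x p. (norm (x - xbar W z))\<^sup>2)"

definition Vp :: "(real \<Rightarrow> (real^'d) \<times> (real^'d) \<Rightarrow> real) \<Rightarrow> real \<Rightarrow> real" where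
  "Vp W z = mom W z (\<lambda>x p. (norm (p - pbar W z))\<^sup>2)"

definition Vxp :: "(real \<Rightarrow> (real^'d) \<times> (real^'d) \<Rightarrow> real) \<Rightarrow> real \<Rightarrow> real" where
  "Vxp W z = mom W z (\<lambda>x p. (x - xbar W z) \<bullet> (p - pbar W z))"

definition potint :: "real \<Rightarrow> (real \<Rightarrow> (real^'d) \<times> (real^'d) \<Rightarrow> real) \<Rightarrow> real \<Rightarrow> real" where
  "potint \<sigma> W z = (\<integral>x. (dens W z x) powr (\<sigma> + 1) \<partial>lborel)"

definition Hamil :: "real \<Rightarrow> real \<Rightarrow> (real \<Rightarrow> (real^'d) \<times> (real^'d) \<Rightarrow> real) \<Rightarrow> real \<Rightarrow> real" where
  "Hamil g \<sigma> W z = 1/2 * mom W z (\<lambda>x p. (norm p)\<^sup>2) - g / (\<sigma> + 1) * potint \<sigma> W z"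

definition Hbar :: "(real \<Rightarrow> (real^'d) \<times> (real^'d) \<Rightarrow> real) \<Rightarrow> real \<Rightarrow> real" where
  "Hbar W z = 1/2 * (norm (pbar W z))\<^sup>2"

text \<open>R = 2 pi \<integral> Phi(0,q) |q|^2 dq.  For the Fokker-Planck operator,
  2 trace D = 2 pi \<integral> Phi(0,q) |q|^2 dq as well, so R is the same in both cases.\<close>
definition Rcoef :: "(real \<Rightarrow> real^'d \<Rightarrow> real) \<Rightarrow> real" where
  "Rcoef \<Phi> = 2 * pi * (\<integral>q. \<Phi> 0 q * (norm q)\<^sup>2 \<partial>lborel)"

definition rapidly_decaying :: "(real \<Rightarrow> real^'d \<Rightarrow> real) \<Rightarrow> bool" where
  "rapidly_decaying \<Phi> \<longleftrightarrow> (\<forall>n::nat. \<exists>C. \<forall>w q. (1 + norm (w, q)) ^ n * \<bar>\<Phi> w q\<bar> \<le> C)"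

definition Fpoly :: "real \<Rightarrow> real \<Rightarrow> real \<Rightarrow> real \<Rightarrow> real \<Rightarrow> real \<Rightarrow> real \<Rightarrow> real" where
  "Fpoly ds R Vx0 Vxp0 H0 Hb z = Vx0 + 2 * Vxp0 * z + ds * (H0 - Hb) * z\<^sup>2 + ds * R / 3 * z ^ 3"

definition zblow :: "real \<Rightarrow> real \<Rightarrow> real \<Rightarrow> real \<Rightarrow> real \<Rightarrow> real" where
  "zblow ds R Vxp0 H0 Hb = (Hb - H0 + sqrt ((H0 - Hb)\<^sup>2 - 2 * R * Vxp0 / ds)) / R"

end

theory Submission
  imports Defs
begin

(* Virial argument. The weak formulation gives Vx' = 2 Vxp and
   Vxp' = Vp - d sigma g/(sigma+1) \<integral>rho^(sigma+1). Since Hbar is conserved, the Hamiltonian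
   H = Vp/2 + Hbar - g/(sigma+1) \<integral>rho^(sigma+1) turns this into
   Vxp' = d sigma (H - Hbar) - (d sigma/2 - 1) Vp, and the energy law H = H(0) + R z/2 together
   with d sigma >= 2 bounds Vxp' by a linear function of z. Integrating twice gives Vx(z) <= F(z)
   for z >= 0 (even with d sigma R/6 in place of d sigma R/3). The sign hypotheses make z0 >= 0,
   so a solution living beyond z0 would have 0 < Vx(z0) <= F(z0) <= 0. *)

lemma DERIV_le_imp_diff_le:
  fixes f g :: "real \<Rightarrow> real"
  assumes "a \<le> b"
    and f: "\<And>x. x \<in> {a..b} \<Longrightarrow> (f has_real_derivative f' x) (at x within {a..b})"
    and g: "\<And>x. x \<in> {a..b} \<Longrightarrow> (g has_real_derivative g' x) (at x within {a..b})"
    and le: "\<And>x. x \<in> {a..b} \<Longrightarrow> f' x \<le> g' x"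
  shows "f b - f a \<le> g b - g a"
proof -
  have diff: "((\<lambda>x. g x - f x) has_derivative (*) (g' x - f' x)) (at x within {a..b})"
    if "a \<le> x" "x \<le> b" for x
    using f g that by (auto simp: has_field_derivative_def[symmetric] intro: DERIV_diff)
  then obtain x where "x \<in> {a..b}" "(g b - f b) - (g a - f a) = (g' x - f' x) * (b - a)"
    using mvt_very_simple[OF \<open>a \<le> b\<close> diff] by auto
  moreover have "0 \<le> (g' x - f' x) * (b - a)"
    using le[OF \<open>x \<in> {a..b}\<close>] \<open>a \<le> b\<close> by simp
  ultimately show ?thesis
    by simp
qed

lemma add_sqrt_diff_square_nonneg:
  fixes c y :: real
  assumes "y \<le> 0 \<or> sqrt y \<le> c"
  shows "0 \<le> c + sqrt (c\<^sup>2 - y)"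
proof (cases "y \<le> 0")
  case True
  then have "\<bar>c\<bar> \<le> sqrt (c\<^sup>2 - y)"
    using real_sqrt_le_mono[of "c\<^sup>2" "c\<^sup>2 - y"] by simp
  then show ?thesis
    using abs_ge_minus_self[of c] by linarith
next
  case False
  with assms have "sqrt y \<le> c" "0 < y"
    by auto
  then have "y \<le> c\<^sup>2"
    by (metis less_imp_le power_mono real_sqrt_ge_zero real_sqrt_pow2)
  then have "0 \<le> sqrt (c\<^sup>2 - y)"
    by simp
  moreover have "0 \<le> sqrt y"
    using \<open>0 < y\<close> by simp
  ultimately show ?thesis
    using \<open>sqrt y \<le> c\<close> by linarith
qed

lemma integrable_mult_of_weighted_bound:
  fixes f q w :: "'a \<Rightarrow> real"
  assumes "integrable M w" "integrable M (\<lambda>t. q t * w t)" "\<And>t. 0 \<le> w t"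
    and "f \<in> borel_measurable M" "\<And>t. \<bar>f t\<bar> \<le> 1 + q t"
  shows "integrable M (\<lambda>t. f t * w t)"
proof (rule Bochner_Integration.integrable_bound)
  show "integrable M (\<lambda>t. w t + q t * w t)"
    using assms(1,2) by simp
  show "(\<lambda>t. f t * w t) \<in> borel_measurable M"
    using assms(1,4) by simp
  show "AE t in M. norm (f t * w t) \<le> norm (w t + q t * w t)"
  proof (intro AE_I2)
    fix t
    have "norm (f t * w t) = \<bar>f t\<bar> * w t"
      using assms(3) by (simp add: abs_mult)
    also have "\<dots> \<le> (1 + q t) * w t"
      by (rule mult_right_mono[OF assms(5) assms(3)])
    also have "\<dots> \<le> norm (w t + q t * w t)"
      by (simp add: distrib_right)
    finally show "norm (f t * w t) \<le> norm (w t + q t * w t)" .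
  qed
qed

lemma integral_centered_inner:
  fixes M :: "'a measure" and U V :: "'a \<Rightarrow> real^'n" and w :: "'a \<Rightarrow> real"
  defines "mU \<equiv> \<chi> i. \<integral>t. U t $ i * w t \<partial>M" and "mV \<equiv> \<chi> i. \<integral>t. V t $ i * w t \<partial>M"
  assumes "integrable M w" "(\<integral>t. w t \<partial>M) = 1"
    and "integrable M (\<lambda>t. (U t \<bullet> V t) * w t)"
    and "\<And>i. integrable M (\<lambda>t. U t $ i * w t)" "\<And>i. integrable M (\<lambda>t. V t $ i * w t)"
  shows "(\<integral>t. ((U t - mU) \<bullet> (V t - mV)) * w t \<partial>M) = (\<integral>t. (U t \<bullet> V t) * w t \<partial>M) - mU \<bullet> mV"
proof -
  have expand: "((U t - mU) \<bullet> (V t - mV)) * w t = (U t \<bullet> V t) * w t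
     - (\<Sum>i\<in>UNIV. mU $ i * (V t $ i * w t)) - (\<Sum>i\<in>UNIV. mV $ i * (U t $ i * w t))
     + (mU \<bullet> mV) * w t" for t
    by (simp add: inner_vec_def algebra_simps sum_distrib_right sum_distrib_left
        sum.distrib[symmetric] sum_subtractf[symmetric])
  show ?thesis
    unfolding expand using assms(3-)
    by (simp add: integral_sum inner_vec_def sum_distrib_left sum_negf mU_def mV_def mult.commute)
qed

lemma Rcoef_nonneg:
  assumes "\<And>q. 0 \<le> \<Phi> 0 q"
  shows "0 \<le> Rcoef \<Phi>"
  unfolding Rcoef_def by (intro mult_nonneg_nonneg integral_nonneg_AE AE_I2) (auto intro: assms)

(* Also for R = 0, where division by zero makes zblow vanish. *)
lemma zblow_nonneg:
  assumes "0 \<le> R" "0 \<le> ds" "v \<le> 0 \<or> sqrt (2 * R * v / ds) \<le> Hb - H0"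
  shows "0 \<le> zblow ds R v H0 Hb"
proof -
  have "2 * R * v / ds \<le> 0 \<or> sqrt (2 * R * v / ds) \<le> Hb - H0"
    using assms by (auto simp: divide_nonpos_nonneg mult_nonneg_nonpos)
  then have "0 \<le> (Hb - H0) + sqrt ((Hb - H0)\<^sup>2 - 2 * R * v / ds)"
    by (rule add_sqrt_diff_square_nonneg)
  then show ?thesis
    using \<open>0 \<le> R\<close> by (simp add: zblow_def power2_commute)
qed

lemma variance_le_Fpoly:
  fixes vx vxp vp h :: "real \<Rightarrow> real"
  assumes "0 \<le> b" "2 \<le> ds" "0 \<le> R"
    and vx': "\<And>s. s \<in> {0..b} \<Longrightarrow> (vx has_real_derivative 2 * vxp s) (at s within {0..b})"
    and vxp': "\<And>s. s \<in> {0..b} \<Longrightarrow>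
      (vxp has_real_derivative ds * (h s - hb) - (ds / 2 - 1) * vp s) (at s within {0..b})"
    and h': "\<And>s. s \<in> {0..b} \<Longrightarrow> (h has_real_derivative R / 2) (at s within {0..b})"
    and vp: "\<And>s. s \<in> {0..b} \<Longrightarrow> 0 \<le> vp s"
  shows "vx b \<le> Fpoly ds R (vx 0) (vxp 0) (h 0) hb b"
proof -
  have h_affine: "h s = h 0 + R / 2 * s" if "s \<in> {0..b}" for s
  proof -
    have "\<exists>c. \<forall>x\<in>{0..b}. h x - R / 2 * x = c"
      by (rule has_field_derivative_zero_constant) (auto intro!: derivative_eq_intros h')
    then obtain c where "\<forall>x\<in>{0..b}. h x - R / 2 * x = c" ..
    then have "h s - R / 2 * s = c" "h 0 - R / 2 * 0 = c"
      using that \<open>0 \<le> b\<close> by (meson atLeastAtMost_iff order_refl)+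
    then show ?thesis
      by simp
  qed
  have vxp_le: "vxp s \<le> vxp 0 + ds * (h 0 - hb) * s + ds * R / 4 * s\<^sup>2" if "s \<in> {0..b}" for s
  proof -
    have "vxp s - vxp 0 \<le> (ds * (h 0 - hb) * s + ds * R / 4 * s\<^sup>2)
        - (ds * (h 0 - hb) * 0 + ds * R / 4 * 0\<^sup>2)"
    proof (rule DERIV_le_imp_diff_le)
      fix x assume x: "x \<in> {0..s}"
      then have "x \<in> {0..b}" using that by auto
      then show "(vxp has_real_derivative ds * (h x - hb) - (ds / 2 - 1) * vp x) (at x within {0..s})"
        using that by (auto intro: DERIV_subset[OF vxp'])
      show "((\<lambda>x. ds * (h 0 - hb) * x + ds * R / 4 * x\<^sup>2) has_real_derivative
          ds * (h 0 - hb) + ds * R / 2 * x) (at x within {0..s})"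
        by (auto intro!: derivative_eq_intros)
      have "ds * (h x - hb) = ds * (h 0 - hb) + ds * R / 2 * x"
        using h_affine[OF \<open>x \<in> {0..b}\<close>] by (simp add: algebra_simps)
      \<comment> \<open>this is where \<open>ds \<ge> 2\<close> is needed\<close>
      moreover have "0 \<le> (ds / 2 - 1) * vp x"
        using vp[OF \<open>x \<in> {0..b}\<close>] \<open>2 \<le> ds\<close> by simp
      ultimately show "ds * (h x - hb) - (ds / 2 - 1) * vp x \<le> ds * (h 0 - hb) + ds * R / 2 * x"
        by linarith
    qed (use that in auto)
    then show ?thesis by simp
  qed
  have "vx b - vx 0 \<le> (2 * vxp 0 * b + ds * (h 0 - hb) * b\<^sup>2 + ds * R / 6 * b ^ 3)
      - (2 * vxp 0 * 0 + ds * (h 0 - hb) * 0\<^sup>2 + ds * R / 6 * 0 ^ 3)"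
  proof (rule DERIV_le_imp_diff_le[OF \<open>0 \<le> b\<close> vx'])
    show "((\<lambda>x. 2 * vxp 0 * x + ds * (h 0 - hb) * x\<^sup>2 + ds * R / 6 * x ^ 3) has_real_derivative
        2 * (vxp 0 + ds * (h 0 - hb) * x + ds * R / 4 * x\<^sup>2)) (at x within {0..b})" for x
      by (auto intro!: derivative_eq_intros simp: algebra_simps power2_eq_square)
    show "2 * vxp x \<le> 2 * (vxp 0 + ds * (h 0 - hb) * x + ds * R / 4 * x\<^sup>2)" if "x \<in> {0..b}" for x
      by (rule mult_left_mono[OF vxp_le[OF that]]) simp
  qed
  then have "vx b \<le> vx 0 + 2 * vxp 0 * b + ds * (h 0 - hb) * b\<^sup>2 + ds * R / 6 * b ^ 3"
    by simp
  moreover have "ds * R / 6 * b ^ 3 \<le> ds * R / 3 * b ^ 3"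
    using assms(1-3) by (simp add: mult_left_mono)
  ultimately show ?thesis
    unfolding Fpoly_def by linarith
qed

locale moment_solution =
  fixes W :: "real \<Rightarrow> (real^'d) \<times> (real^'d) \<Rightarrow> real"
    and zs :: ereal and g \<sigma> ds :: real
  assumes W_nonneg: "\<And>z xp. 0 \<le> z \<Longrightarrow> ereal z < zs \<Longrightarrow> W z xp \<ge> 0"
    and W_int: "\<And>z. 0 \<le> z \<Longrightarrow> ereal z < zs \<Longrightarrow> integrable lborel (W z)"
    and W_x2: "\<And>z. 0 \<le> z \<Longrightarrow> ereal z < zs \<Longrightarrow>
                 integrable lborel (\<lambda>xp. (norm (fst xp))\<^sup>2 * W z xp)"
    and W_p2: "\<And>z. 0 \<le> z \<Longrightarrow> ereal z < zs \<Longrightarrow>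
                 integrable lborel (\<lambda>xp. (norm (snd xp))\<^sup>2 * W z xp)"
    and W_norm: "\<And>z. 0 \<le> z \<Longrightarrow> ereal z < zs \<Longrightarrow> mom W z (\<lambda>x p. 1) = 1"
    and wf_x: "\<And>z i. 0 \<le> z \<Longrightarrow> ereal z < zs \<Longrightarrow>
                 ((\<lambda>s. mom W s (\<lambda>x p. x $ i)) has_real_derivative mom W z (\<lambda>x p. p $ i))
                   (at z within {0..})"
    and wf_p: "\<And>z i. 0 \<le> z \<Longrightarrow> ereal z < zs \<Longrightarrow>
                 ((\<lambda>s. mom W s (\<lambda>x p. p $ i)) has_real_derivative 0) (at z within {0..})"
    and wf_x2: "\<And>z. 0 \<le> z \<Longrightarrow> ereal z < zs \<Longrightarrow>
                 ((\<lambda>s. mom W s (\<lambda>x p. (norm x)\<^sup>2)) has_real_derivative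
                    2 * mom W z (\<lambda>x p. x \<bullet> p)) (at z within {0..})"
    and wf_xp: "\<And>z. 0 \<le> z \<Longrightarrow> ereal z < zs \<Longrightarrow>
                 ((\<lambda>s. mom W s (\<lambda>x p. x \<bullet> p)) has_real_derivative
                    mom W z (\<lambda>x p. (norm p)\<^sup>2) - g * ds / (\<sigma> + 1) * potint \<sigma> W z)
                   (at z within {0..})"
begin

lemma integrable_moments:
  assumes "0 \<le> s" "ereal s < zs"
  shows "integrable lborel (\<lambda>t. fst t $ i * W s t)"
    and "integrable lborel (\<lambda>t. snd t $ i * W s t)"
    and "integrable lborel (\<lambda>t. (fst t \<bullet> snd t) * W s t)"
proof -
  define q where "q t = (norm (fst t))\<^sup>2 + (norm (snd t))\<^sup>2" for t :: "(real^'d) \<times> (real^'d)"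
  have q: "integrable lborel (\<lambda>t. q t * W s t)"
    using W_x2[OF assms] W_p2[OF assms] by (simp add: q_def distrib_right)
  have norm_le: "norm v \<le> 1 + (norm v)\<^sup>2" for v :: "real^'d"
    using sum_squares_bound[of 1 "norm v"] norm_ge_zero[of v] unfolding power2_eq_square by linarith
  note bound = integrable_mult_of_weighted_bound[OF W_int[OF assms] q W_nonneg[OF assms]]
  show "integrable lborel (\<lambda>t. fst t $ i * W s t)"
  proof (rule bound)
    show "\<bar>fst t $ i\<bar> \<le> 1 + q t" for t
      using component_le_norm_cart[of "fst t" i] norm_le[of "fst t"] zero_le_power2[of "norm (snd t)"]
      unfolding q_def by linarith
  qed (simp add: borel_measurable_continuous_onI continuous_intros)
  show "integrable lborel (\<lambda>t. snd t $ i * W s t)"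
  proof (rule bound)
    show "\<bar>snd t $ i\<bar> \<le> 1 + q t" for t
      using component_le_norm_cart[of "snd t" i] norm_le[of "snd t"] zero_le_power2[of "norm (fst t)"]
      unfolding q_def by linarith
  qed (simp add: borel_measurable_continuous_onI continuous_intros)
  show "integrable lborel (\<lambda>t. (fst t \<bullet> snd t) * W s t)"
  proof (rule bound)
    show "\<bar>fst t \<bullet> snd t\<bar> \<le> 1 + q t" for t
      using Cauchy_Schwarz_ineq2[of "fst t" "snd t"]
        sum_squares_bound[of "norm (fst t)" "norm (snd t)"]
      by (simp add: q_def power2_eq_square)
  qed (simp add: borel_measurable_continuous_onI continuous_intros)
qed


lemma integral_W_eq_1:
  assumes "0 \<le> s" "ereal s < zs"
  shows "(\<integral>t. W s t \<partial>lborel) = 1"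
  using W_norm[OF assms] by (simp add: mom_def)

lemma Vx_eq:
  assumes "0 \<le> s" "ereal s < zs"
  shows "Vx W s = mom W s (\<lambda>x p. (norm x)\<^sup>2) - (norm (xbar W s))\<^sup>2"
  using integral_centered_inner[of lborel "W s" fst fst] W_int[OF assms] integral_W_eq_1[OF assms]
    W_x2[OF assms] integrable_moments(1)[OF assms]
  by (simp add: Vx_def xbar_def mom_def power2_norm_eq_inner)

lemma Vxp_eq:
  assumes "0 \<le> s" "ereal s < zs"
  shows "Vxp W s = mom W s (\<lambda>x p. x \<bullet> p) - xbar W s \<bullet> pbar W s"
  using integral_centered_inner[of lborel "W s" fst snd] W_int[OF assms] integral_W_eq_1[OF assms]
    integrable_moments[OF assms]
  by (simp add: Vxp_def xbar_def pbar_def mom_def)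

lemma Vp_eq:
  assumes "0 \<le> s" "ereal s < zs"
  shows "Vp W s = mom W s (\<lambda>x p. (norm p)\<^sup>2) - (norm (pbar W s))\<^sup>2"
  using integral_centered_inner[of lborel "W s" snd snd] W_int[OF assms] integral_W_eq_1[OF assms]
    W_p2[OF assms] integrable_moments(2)[OF assms]
  by (simp add: Vp_def pbar_def mom_def power2_norm_eq_inner)


lemma xbar_has_derivative:
  assumes "0 \<le> s" "ereal s < zs"
  shows "((\<lambda>s. xbar W s $ i) has_real_derivative pbar W s $ i) (at s within {0..})"
  using wf_x[OF assms] by (simp add: xbar_def pbar_def)

lemma pbar_has_derivative:
  assumes "0 \<le> s" "ereal s < zs"
  shows "((\<lambda>s. pbar W s $ i) has_real_derivative 0) (at s within {0..})"
  using wf_p[OF assms] by (simp add: pbar_def)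

lemma pbar_eq_pbar0:
  assumes "0 \<le> s" "ereal s < zs"
  shows "pbar W s = pbar W 0"
proof -
  have "\<exists>c. \<forall>t\<in>{0..s}. pbar W t $ i = c" for i
  proof (rule has_field_derivative_zero_constant)
    fix t assume "t \<in> {0..s}"
    with assms have "0 \<le> t" "ereal t < zs"
      by (auto intro: order.strict_trans1[of "ereal t" "ereal s"])
    then show "((\<lambda>t. pbar W t $ i) has_real_derivative 0) (at t within {0..s})"
      by (auto intro: DERIV_subset[OF pbar_has_derivative])
  qed simp
  then have "pbar W s $ i = pbar W 0 $ i" for i
    using assms(1) by (metis atLeastAtMost_iff order_refl)
  then show ?thesis
    by (simp add: vec_eq_iff)
qed

lemma Hamil_eq:
  assumes "0 \<le> s" "ereal s < zs"
  shows "Hamil g \<sigma> W s = Vp W s / 2 + Hbar W s - g / (\<sigma> + 1) * potint \<sigma> W s"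
  by (simp add: Hamil_def Hbar_def Vp_eq[OF assms] field_simps)

lemma Vx_has_derivative:
  assumes "ereal b < zs" "s \<in> {0..b}"
  shows "(Vx W has_real_derivative 2 * Vxp W s) (at s within {0..b})"
proof -
  have range: "0 \<le> t" "ereal t < zs" if "t \<in> {0..b}" for t
    using that assms(1) by (auto intro: order.strict_trans1[of "ereal t" "ereal b"])
  let ?vx = "\<lambda>s. mom W s (\<lambda>x p. (norm x)\<^sup>2) - (\<Sum>i\<in>UNIV. xbar W s $ i * xbar W s $ i)"
  have "(?vx has_real_derivative 2 * mom W s (\<lambda>x p. x \<bullet> p)
      - (\<Sum>i\<in>UNIV. pbar W s $ i * xbar W s $ i + pbar W s $ i * xbar W s $ i)) (at s within {0..})"
    by (intro DERIV_diff DERIV_sum DERIV_mult wf_x2 xbar_has_derivative range assms(2))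
  moreover have "2 * mom W s (\<lambda>x p. x \<bullet> p)
      - (\<Sum>i\<in>UNIV. pbar W s $ i * xbar W s $ i + pbar W s $ i * xbar W s $ i) = 2 * Vxp W s"
    by (simp add: Vxp_eq[OF range[OF assms(2)]] inner_vec_def sum.distrib sum_distrib_left algebra_simps)
  ultimately have "(?vx has_real_derivative 2 * Vxp W s) (at s within {0..b})"
    by (auto intro: DERIV_subset)
  then show ?thesis
    by (rule has_field_derivative_transform_within[where d=1])
      (use assms(2) in \<open>auto simp: Vx_eq[OF range] power2_norm_eq_inner inner_vec_def\<close>)
qed

lemma Vxp_has_derivative:
  assumes "ereal b < zs" "s \<in> {0..b}"
  shows "(Vxp W has_real_derivative ds * (Hamil g \<sigma> W s - Hbar W 0) - (ds / 2 - 1) * Vp W s)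
    (at s within {0..b})"
proof -
  have range: "0 \<le> t" "ereal t < zs" if "t \<in> {0..b}" for t
    using that assms(1) by (auto intro: order.strict_trans1[of "ereal t" "ereal b"])
  let ?vxp = "\<lambda>s. mom W s (\<lambda>x p. x \<bullet> p) - (\<Sum>i\<in>UNIV. xbar W s $ i * pbar W s $ i)"
  have "(?vxp has_real_derivative mom W s (\<lambda>x p. (norm p)\<^sup>2) - g * ds / (\<sigma> + 1) * potint \<sigma> W s
      - (\<Sum>i\<in>UNIV. pbar W s $ i * pbar W s $ i + 0 * xbar W s $ i)) (at s within {0..})"
    by (intro DERIV_diff DERIV_sum DERIV_mult wf_xp xbar_has_derivative pbar_has_derivative
        range assms(2))
  moreover have "mom W s (\<lambda>x p. (norm p)\<^sup>2) - g * ds / (\<sigma> + 1) * potint \<sigma> W s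
      - (\<Sum>i\<in>UNIV. pbar W s $ i * pbar W s $ i + 0 * xbar W s $ i)
      = ds * (Hamil g \<sigma> W s - Hbar W 0) - (ds / 2 - 1) * Vp W s"
    using range[OF assms(2)]
    by (simp add: Hamil_eq Vp_eq Hbar_def pbar_eq_pbar0[symmetric] power2_norm_eq_inner inner_vec_def
        field_simps)
  ultimately have "(?vxp has_real_derivative ds * (Hamil g \<sigma> W s - Hbar W 0) - (ds / 2 - 1) * Vp W s)
      (at s within {0..b})"
    by (auto intro: DERIV_subset)
  then show ?thesis
    by (rule has_field_derivative_transform_within[where d=1])
      (use assms(2) in \<open>auto simp: Vxp_eq[OF range] inner_vec_def\<close>)
qed

end

theorem proposition3:
  fixes \<Phi> :: "real \<Rightarrow> real^'d \<Rightarrow> real"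
    and W :: "real \<Rightarrow> (real^'d) \<times> (real^'d) \<Rightarrow> real"
    and g \<sigma> :: real and zs :: ereal
  defines "ds \<equiv> real CARD('d) * \<sigma>"
  assumes Phi_nonneg: "\<And>w q. \<Phi> w q \<ge> 0"
    and Phi_sym: "\<And>w q. \<Phi> w q = \<Phi> (-w) q \<and> \<Phi> w q = \<Phi> w (-q) \<and> \<Phi> w q = \<Phi> (-w) (-q)"
    and Phi_meas: "(\<lambda>wq. \<Phi> (fst wq) (snd wq)) \<in> borel_measurable lborel"
    and Phi_decay: "rapidly_decaying \<Phi>"
    and sigma_pos: "\<sigma> > 0" and ds_ge: "ds \<ge> 2" and g_pos: "g > 0"
    and zs_pos: "zs > 0"
    \<comment> \<open>regularity of the local solution on [0, zs)\<close>
    and W_nonneg: "\<And>z xp. 0 \<le> z \<Longrightarrow> ereal z < zs \<Longrightarrow> W z xp \<ge> 0"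
    and W_int: "\<And>z. 0 \<le> z \<Longrightarrow> ereal z < zs \<Longrightarrow> integrable lborel (W z)"
    and W_L2: "\<And>z. 0 \<le> z \<Longrightarrow> ereal z < zs \<Longrightarrow> integrable lborel (\<lambda>xp. (W z xp)\<^sup>2)"
    and W_x2: "\<And>z. 0 \<le> z \<Longrightarrow> ereal z < zs \<Longrightarrow>
                 integrable lborel (\<lambda>xp. (norm (fst xp))\<^sup>2 * W z xp)"
    and W_p2: "\<And>z. 0 \<le> z \<Longrightarrow> ereal z < zs \<Longrightarrow>
                 integrable lborel (\<lambda>xp. (norm (snd xp))\<^sup>2 * W z xp)"
    and W_pot: "\<And>z. 0 \<le> z \<Longrightarrow> ereal z < zs \<Longrightarrow>
                 integrable lborel (\<lambda>x. (dens W z x) powr (\<sigma> + 1))"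
    and W_norm: "\<And>z. 0 \<le> z \<Longrightarrow> ereal z < zs \<Longrightarrow> mom W z (\<lambda>x p. 1) = 1"
    and Vx_pos: "\<And>z. 0 \<le> z \<Longrightarrow> ereal z < zs \<Longrightarrow> Vx W z > 0"
    and Vp_pos: "\<And>z. 0 \<le> z \<Longrightarrow> ereal z < zs \<Longrightarrow> Vp W z > 0"
    and mixed: "\<And>z. 0 \<le> z \<Longrightarrow> ereal z < zs \<Longrightarrow> (Vxp W z)\<^sup>2 \<le> Vx W z * Vp W z"
    \<comment> \<open>weak formulation with test functions x_i, p_i, |x|^2, x.p, and energy law\<close>
    and wf_x: "\<And>z i. 0 \<le> z \<Longrightarrow> ereal z < zs \<Longrightarrow>
                 ((\<lambda>s. mom W s (\<lambda>x p. x $ i)) has_real_derivative mom W z (\<lambda>x p. p $ i))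
                   (at z within {0..})"
    and wf_p: "\<And>z i. 0 \<le> z \<Longrightarrow> ereal z < zs \<Longrightarrow>
                 ((\<lambda>s. mom W s (\<lambda>x p. p $ i)) has_real_derivative 0) (at z within {0..})"
    and wf_x2: "\<And>z. 0 \<le> z \<Longrightarrow> ereal z < zs \<Longrightarrow>
                 ((\<lambda>s. mom W s (\<lambda>x p. (norm x)\<^sup>2)) has_real_derivative
                    2 * mom W z (\<lambda>x p. x \<bullet> p)) (at z within {0..})"
    and wf_xp: "\<And>z. 0 \<le> z \<Longrightarrow> ereal z < zs \<Longrightarrow>
                 ((\<lambda>s. mom W s (\<lambda>x p. x \<bullet> p)) has_real_derivative
                    mom W z (\<lambda>x p. (norm p)\<^sup>2) - g * ds / (\<sigma> + 1) * potint \<sigma> W z)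
                   (at z within {0..})"
    and energy: "\<And>z. 0 \<le> z \<Longrightarrow> ereal z < zs \<Longrightarrow>
                 ((\<lambda>s. Hamil g \<sigma> W s) has_real_derivative Rcoef \<Phi> / 2) (at z within {0..})"
    \<comment> \<open>blow-up criterion\<close>
    and F_nonpos: "Fpoly ds (Rcoef \<Phi>) (Vx W 0) (Vxp W 0) (Hamil g \<sigma> W 0) (Hbar W 0)
                     (zblow ds (Rcoef \<Phi>) (Vxp W 0) (Hamil g \<sigma> W 0) (Hbar W 0)) \<le> 0"
    and cases: "Vxp W 0 < 0 \<or>
                (Vxp W 0 > 0 \<and>
                 Hamil g \<sigma> W 0 < Hbar W 0 - sqrt (2 * Rcoef \<Phi> * Vxp W 0 / ds))"
  shows "zs \<le> ereal (zblow ds (Rcoef \<Phi>) (Vxp W 0) (Hamil g \<sigma> W 0) (Hbar W 0))"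
proof (rule ccontr)
  define Z where "Z = zblow ds (Rcoef \<Phi>) (Vxp W 0) (Hamil g \<sigma> W 0) (Hbar W 0)"
  assume "\<not> zs \<le> ereal Z"
  then have "ereal Z < zs"
    by simp
  interpret moment_solution W zs g \<sigma> ds
    by unfold_locales (fact W_nonneg W_int W_x2 W_p2 W_norm wf_x wf_p wf_x2 wf_xp)+
  have R: "0 \<le> Rcoef \<Phi>"
    using Phi_nonneg by (rule Rcoef_nonneg)
  have "0 \<le> Z"
    unfolding Z_def using R ds_ge cases by (intro zblow_nonneg) auto
  have "Vx W Z \<le> Fpoly ds (Rcoef \<Phi>) (Vx W 0) (Vxp W 0) (Hamil g \<sigma> W 0) (Hbar W 0) Z"
  proof (rule variance_le_Fpoly[where vx = "Vx W" and vxp = "Vxp W" and vp = "Vp W"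
        and h = "Hamil g \<sigma> W", OF \<open>0 \<le> Z\<close> ds_ge R])
    fix s assume s: "s \<in> {0..Z}"
    then have "ereal s < zs"
      using \<open>ereal Z < zs\<close> by (auto intro: order.strict_trans1[of "ereal s" "ereal Z"])
    with s show "(Hamil g \<sigma> W has_real_derivative Rcoef \<Phi> / 2) (at s within {0..Z})"
      by (auto intro: DERIV_subset[OF energy])
    show "0 \<le> Vp W s"
      using Vp_pos s \<open>ereal s < zs\<close> by (simp add: less_imp_le)
  qed (use Vx_has_derivative Vxp_has_derivative \<open>ereal Z < zs\<close> in auto)
  also have "\<dots> \<le> 0"
    using F_nonpos unfolding Z_def .
  finally show False
    using Vx_pos[OF \<open>0 \<le> Z\<close> \<open>ereal Z < zs\<close>] by simp
qed

end
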